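(* As formal power series in $t$, $$ \sum_{n \ge 0} f^+_n(x) \frac{t^n}{n!} = \frac{e^{xt} - x e^t}{e^{2xt} - x e^{2t}} \quad\text{and}\quad \sum_{n \ge 0} f^-_n(x) \frac{t^n}{n!} = \frac{x\,(e^t - e^{xt})}{e^{2xt} - x e^{2t}}. $$
   Context: A signed permutation of $[n]$ is a set $S = \{a_1, \dots, a_n\}$ with $a_i \in \{i, -i\}$, together with a bijection $w : S \to S$. - $a \in S$ is a $B$-excedance if $w(a) > a$, or if $a < 0$ and $w(a) = a$. - $w$ is a derangement if no $a \in S$ with $a > 0$ has $w(a) = a$. - $d^B_n(x) = \sum_{w \text{ derangement}} x^{\mathrm{exc}_B(w)}$, where $\mathrm{exc}_B(w)$ is the number of $B$-excedances, and $d^B_0 = 1$. - $f^+_n, f^-_n$ are the unique real polynomials with $d^B_n = f^+_n + f^-_n$, $f^+_n(x) = x^n f^+_n(1/x)$ and $f^-_n(x) = x^{n+1} f^-_n(1/x)$. *)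

theory Defs
  imports "HOL-Computational_Algebra.Computational_Algebra"
begin

text \<open>A signed permutation of [n]: a set S = {a_1,...,a_n} with a_i in {i,-i},
  together with a bijection w : S -> S (extended by the identity outside S,
  so that each signed permutation has a unique representative).\<close>
definition signed_perms :: "nat \<Rightarrow> (int set \<times> (int \<Rightarrow> int)) set" where
  "signed_perms n = {(S, w).
     (\<exists>a :: nat \<Rightarrow> int. (\<forall>i\<in>{1..n}. a i = int i \<or> a i = - int i) \<and> S = a ` {1..n})
     \<and> bij_betw w S S \<and> (\<forall>b. b \<notin> S \<longrightarrow> w b = b)}"

definition excB :: "int set \<Rightarrow> (int \<Rightarrow> int) \<Rightarrow> nat" where
  "excB S w = card {a \<in> S. w a > a \<or> (a < 0 \<and> w a = a)}"

definition is_derangementB :: "int set \<Rightarrow> (int \<Rightarrow> int) \<Rightarrow> bool" where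
  "is_derangementB S w \<longleftrightarrow> (\<forall>a\<in>S. a > 0 \<longrightarrow> w a \<noteq> a)"

definition dB :: "nat \<Rightarrow> real poly" where
  "dB n = (if n = 0 then 1 else
     (\<Sum>(S, w) \<in> {(S, w) \<in> signed_perms n. is_derangementB S w}. monom 1 (excB S w)))"

definition fpm :: "nat \<Rightarrow> real poly \<times> real poly" where
  "fpm n = (THE (p, q). dB n = p + q
      \<and> (\<forall>x::real. x \<noteq> 0 \<longrightarrow> poly p x = x ^ n * poly p (1 / x))
      \<and> (\<forall>x::real. x \<noteq> 0 \<longrightarrow> poly q x = x ^ (n + 1) * poly q (1 / x)))"

definition fplus :: "nat \<Rightarrow> real poly" where "fplus n = fst (fpm n)"
definition fminus :: "nat \<Rightarrow> real poly" where "fminus n = snd (fpm n)"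

end

theory Submission
  imports Defs "HOL-Combinatorics.Permutations"
begin

text \<open>
  Remove the largest letter m from a B-derangement of [n+1]. If m is a negative fixed point this
  contributes x d_n. If m forms a 2-cycle with a positive letter k, a derangement of the other
  n - 1 letters remains, contributing 2n x d_(n-1). Otherwise m can be cut out of its cycle;
  reinserting it behind any of the n letters a, with either sign, raises the excedance number
  by 1 - [a is an excedance], contributing 2n x d_n + 2x(1-x) d_n'. Hence
    d_(n+1) = (2n+1) x d_n + 2x(1-x) d_n' + 2n x d_(n-1),
  a first order linear PDE for the exponential generating function D(x,t), and
  (e^(2xt) - x e^(2t)) D = (1-x) e^(xt) because both sides satisfy it and agree at t = 0.
  Finally f^+_n = (x^(n+1) d_n(1/x) - d_n(x))/(x - 1) and f^-_n = d_n - f^+_n, and substituting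
  1/x for x and xt for t in the identity for D yields their generating functions.
\<close>

definition signed_set :: "nat set \<Rightarrow> int set \<Rightarrow> bool" where
  "signed_set A S \<longleftrightarrow>
     S \<subseteq> int ` A \<union> uminus ` int ` A \<and> (\<forall>i\<in>A. int i \<in> S \<longleftrightarrow> - int i \<notin> S)"

lemma signed_set_mem:
  assumes "signed_set A S" "a \<in> S"
  shows "nat \<bar>a\<bar> \<in> A \<and> (a = int (nat \<bar>a\<bar>) \<or> a = - int (nat \<bar>a\<bar>))"
  using assms unfolding signed_set_def by auto

lemma signed_set_abs_inj:
  assumes "signed_set A S" "0 \<notin> A" "a \<in> S" "b \<in> S" "\<bar>a\<bar> = \<bar>b\<bar>"
  shows "a = b"
proof (rule ccontr)
  assume "a \<noteq> b"
  with assms(5) have "b = - a" by arith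
  moreover have "nat \<bar>a\<bar> \<in> A" "a \<noteq> 0"
    using signed_set_mem[OF assms(1,3)] assms(2) by auto
  ultimately show False
    using assms(1,3,4) unfolding signed_set_def by (cases "a > 0") force+
qed

lemma finite_signed_set: "finite A \<Longrightarrow> signed_set A S \<Longrightarrow> finite S"
  unfolding signed_set_def by (meson finite_Un finite_imageI finite_subset)

lemma card_signed_set:
  assumes "finite A" "signed_set A S" "0 \<notin> A"
  shows "card S = card A"
proof -
  have "bij_betw (\<lambda>a. nat \<bar>a\<bar>) S A"
  proof (rule bij_betw_imageI)
    show "inj_on (\<lambda>a. nat \<bar>a\<bar>) S"
      by (rule inj_onI) (metis assms(2,3) signed_set_abs_inj abs_ge_zero nat_eq_iff2)
    show "(\<lambda>a. nat \<bar>a\<bar>) ` S = A"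
    proof
      show "(\<lambda>a. nat \<bar>a\<bar>) ` S \<subseteq> A" using signed_set_mem[OF assms(2)] by auto
      show "A \<subseteq> (\<lambda>a. nat \<bar>a\<bar>) ` S"
      proof
        fix i assume "i \<in> A"
        then have "int i \<in> S \<or> - int i \<in> S" using assms(2) unfolding signed_set_def by blast
        then show "i \<in> (\<lambda>a. nat \<bar>a\<bar>) ` S"
          by (metis abs_minus_cancel image_iff nat_int abs_of_nat)
      qed
    qed
  qed
  then show ?thesis by (simp add: bij_betw_same_card)
qed

lemma signed_set_insert:
  assumes "signed_set A S" "k \<notin> A" "k > 0" "b = int k \<or> b = - int k"
  shows "signed_set (insert k A) (insert b S)"
proof -
  have new: "int k \<notin> S" "- int k \<notin> S"
    using assms(2) signed_set_mem[OF assms(1)] by (metis nat_int abs_minus_cancel abs_of_nat)+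
  show ?thesis unfolding signed_set_def
  proof (intro conjI ballI)
    show "insert b S \<subseteq> int ` insert k A \<union> uminus ` int ` insert k A"
      using assms unfolding signed_set_def by auto
    fix i assume "i \<in> insert k A"
    then show "int i \<in> insert b S \<longleftrightarrow> - int i \<notin> insert b S"
      using assms(1,3,4) new unfolding signed_set_def by (cases "i = k") auto
  qed
qed

lemma signed_set_remove:
  assumes S: "signed_set A S" and "0 \<notin> A" "b \<in> S"
  shows "signed_set (A - {nat \<bar>b\<bar>}) (S - {b})"
proof -
  have other: "x \<in> S \<Longrightarrow> x \<noteq> b \<Longrightarrow> nat \<bar>x\<bar> \<noteq> nat \<bar>b\<bar>" for x
    using signed_set_abs_inj[OF S assms(2) _ assms(3)] by (metis abs_ge_zero int_nat_eq)
  show ?thesis unfolding signed_set_def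
  proof (intro conjI ballI)
    show "S - {b} \<subseteq> int ` (A - {nat \<bar>b\<bar>}) \<union> uminus ` int ` (A - {nat \<bar>b\<bar>})"
    proof
      fix x assume x: "x \<in> S - {b}"
      then have "nat \<bar>x\<bar> \<in> A - {nat \<bar>b\<bar>}" using signed_set_mem[OF S] other by blast
      moreover have "x = int (nat \<bar>x\<bar>) \<or> x = - int (nat \<bar>x\<bar>)" using signed_set_mem[OF S] x by blast
      ultimately show "x \<in> int ` (A - {nat \<bar>b\<bar>}) \<union> uminus ` int ` (A - {nat \<bar>b\<bar>})"
        by (metis UnI1 UnI2 image_eqI)
    qed
    fix i assume "i \<in> A - {nat \<bar>b\<bar>}"
    then show "int i \<in> S - {b} \<longleftrightarrow> - int i \<notin> S - {b}"
      using S unfolding signed_set_def by auto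
  qed
qed

lemma signed_set_iff_image:
  assumes "0 \<notin> A"
  shows "(\<exists>a :: nat \<Rightarrow> int. (\<forall>i\<in>A. a i = int i \<or> a i = - int i) \<and> S = a ` A)
    \<longleftrightarrow> signed_set A S"
proof
  assume "\<exists>a :: nat \<Rightarrow> int. (\<forall>i\<in>A. a i = int i \<or> a i = - int i) \<and> S = a ` A"
  then obtain a :: "nat \<Rightarrow> int" where a: "\<forall>i\<in>A. a i = int i \<or> a i = - int i" and S: "S = a ` A"
    by blast
  have uniq: "j \<in> A \<Longrightarrow> a j = int i \<or> a j = - int i \<Longrightarrow> j = i" for i j
    using a by force
  show "signed_set A S" unfolding signed_set_def
  proof (intro conjI ballI)
    show "S \<subseteq> int ` A \<union> uminus ` int ` A" using a S by auto
    fix i assume i: "i \<in> A"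
    have "i > 0" using i assms by (cases i) auto
    show "int i \<in> S \<longleftrightarrow> - int i \<notin> S"
    proof
      assume "int i \<in> S"
      then obtain j where "j \<in> A" "a j = int i" using S by auto
      then have "a i = int i" using uniq[of _ i] by blast
      then show "- int i \<notin> S" using S uniq[of _ i] \<open>i > 0\<close> by force
    next
      assume "- int i \<notin> S"
      then have "a i \<noteq> - int i" using S i by (metis image_eqI)
      then show "int i \<in> S" using a S i by force
    qed
  qed
next
  assume S: "signed_set A S"
  define a where "a = (\<lambda>i::nat. if int i \<in> S then int i else - int i)"
  have "\<forall>i\<in>A. a i = int i \<or> a i = - int i" unfolding a_def by auto
  moreover have "S = a ` A"
  proof
    show "S \<subseteq> a ` A"
    proof
      fix x assume x: "x \<in> S"
      then have "nat \<bar>x\<bar> \<in> A" "x = int (nat \<bar>x\<bar>) \<or> x = - int (nat \<bar>x\<bar>)"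
        using signed_set_mem[OF S] by blast+
      moreover have "x = a (nat \<bar>x\<bar>)"
        using calculation S x unfolding a_def signed_set_def by (metis (no_types, lifting))
      ultimately show "x \<in> a ` A" by blast
    qed
    show "a ` A \<subseteq> S" using S unfolding a_def signed_set_def by auto
  qed
  ultimately show "\<exists>a :: nat \<Rightarrow> int. (\<forall>i\<in>A. a i = int i \<or> a i = - int i) \<and> S = a ` A"
    by blast
qed

definition derangementsB :: "nat set \<Rightarrow> (int set \<times> (int \<Rightarrow> int)) set" where
  "derangementsB A =
     {(S, w). signed_set A S \<and> w permutes S \<and> (\<forall>a\<in>S. a > 0 \<longrightarrow> w a \<noteq> a)}"

definition excedanceB :: "(int \<Rightarrow> int) \<Rightarrow> int \<Rightarrow> bool" where
  "excedanceB w a \<longleftrightarrow> w a > a \<or> (a < 0 \<and> w a = a)"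

lemma excB_eq_card: "excB S w = card {a\<in>S. excedanceB w a}"
  by (simp add: excB_def excedanceB_def)

fun weightB :: "int set \<times> (int \<Rightarrow> int) \<Rightarrow> real poly" where
  "weightB (S, w) = monom 1 (excB S w)"

definition derangement_poly :: "nat set \<Rightarrow> real poly" where
  "derangement_poly A = sum weightB (derangementsB A)"

lemma finite_derangementsB:
  assumes "finite A" shows "finite (derangementsB A)"
proof -
  let ?U = "int ` A \<union> uminus ` int ` A"
  have "derangementsB A \<subseteq> Sigma (Pow ?U) (\<lambda>S. {w. w permutes S})"
    unfolding derangementsB_def signed_set_def by auto
  moreover have "finite (Sigma (Pow ?U) (\<lambda>S. {w. w permutes S}))"
    using assms by (intro finite_SigmaI finite_permutations) (auto intro: finite_subset)
  ultimately show ?thesis by (rule finite_subset)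
qed

lemma derangementsB_empty: "derangementsB {} = {({}, id)}"
  unfolding derangementsB_def signed_set_def by (auto simp: permutes_empty)

lemma derangementsB_signed_perms:
  "{(S, w) \<in> signed_perms n. is_derangementB S w} = derangementsB {1..n}"
proof -
  have "bij_betw w S S \<and> (\<forall>b. b \<notin> S \<longrightarrow> w b = b) \<longleftrightarrow> w permutes S"
    for w :: "int \<Rightarrow> int" and S
    using bij_imp_permutes permutes_imp_bij permutes_not_in by metis
  moreover have "(0::nat) \<notin> {1..n}" by simp
  ultimately show ?thesis
    unfolding signed_perms_def derangementsB_def is_derangementB_def
    by (simp add: signed_set_iff_image)
qed

lemma dB_eq_derangement_poly:
  assumes "n > 0" shows "dB n = derangement_poly {1..n}"
proof -
  have "(\<lambda>(S, w). monom 1 (excB S w)) = weightB" by (auto simp: fun_eq_iff)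
  then show ?thesis using assms by (simp add: dB_def derangement_poly_def derangementsB_signed_perms)
qed

fun insertion_weight :: "int set \<times> (int \<Rightarrow> int) \<Rightarrow> int \<Rightarrow> real poly" where
  "insertion_weight (S, w) a = monom 1 (excB S w - (if excedanceB w a then 1 else 0) + 1)"

lemma sum_monom_card_filter:
  assumes "finite S"
  shows "(\<Sum>a\<in>S. monom (1::real) (card {x\<in>S. Q x} - (if Q a then 1 else 0) + 1))
    = of_nat (card {x\<in>S. Q x}) * monom 1 (card {x\<in>S. Q x})
      + of_nat (card S - card {x\<in>S. Q x}) * monom 1 (Suc (card {x\<in>S. Q x}))"
proof -
  define E where "E = {x\<in>S. Q x}"
  have finE: "finite E" and sub: "E \<subseteq> S" using assms unfolding E_def by auto
  have "(\<Sum>a\<in>S. monom (1::real) (card E - (if Q a then 1 else 0) + 1))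
       = (\<Sum>a\<in>E. monom (1::real) (card E - (if Q a then 1 else 0) + 1))
         + (\<Sum>a\<in>S - E. monom (1::real) (card E - (if Q a then 1 else 0) + 1))"
    using sum.subset_diff[OF sub assms] by (simp add: add.commute)
  also have "(\<Sum>a\<in>E. monom (1::real) (card E - (if Q a then 1 else 0) + 1))
      = (\<Sum>a\<in>E. monom (1::real) (card E))"
  proof (rule sum.cong)
    fix a assume a: "a \<in> E"
    then have "card E \<ge> 1" using finE by (metis One_nat_def Suc_leI card_gt_0_iff empty_iff)
    then show "monom (1::real) (card E - (if Q a then 1 else 0) + 1) = monom 1 (card E)"
      using a unfolding E_def by simp
  qed simp
  also have "(\<Sum>a\<in>S - E. monom (1::real) (card E - (if Q a then 1 else 0) + 1))
      = (\<Sum>a\<in>S - E. monom (1::real) (Suc (card E)))"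
    by (rule sum.cong) (auto simp: E_def)
  finally show ?thesis using card_Diff_subset[OF finE sub] unfolding E_def[symmetric] by simp
qed

lemma sum_insertion_weight:
  assumes "finite S"
  shows "(\<Sum>a\<in>S. 2 * insertion_weight (S, w) a)
    = smult (2 * real (card S)) ([:0,1:] * weightB (S, w)) + [:0,2,-2:] * pderiv (weightB (S, w))"
proof -
  define e where "e = excB S w"
  have "e \<le> card S"
    unfolding e_def excB_eq_card by (rule card_mono[OF assms]) auto
  have "(\<Sum>a\<in>S. insertion_weight (S, w) a)
      = of_nat e * monom 1 e + of_nat (card S - e) * monom 1 (Suc e)"
    using sum_monom_card_filter[OF assms, of "excedanceB w"] by (simp add: e_def excB_eq_card)
  then have "(\<Sum>a\<in>S. 2 * insertion_weight (S, w) a)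
      = 2 * (of_nat e * monom 1 e + of_nat (card S - e) * monom 1 (Suc e))"
    by (simp add: sum_distrib_left[symmetric])
  also have "\<dots> = smult (2 * real (card S)) ([:0,1:] * monom 1 e) + [:0,2,-2:] * pderiv (monom 1 e)"
  proof (rule poly_ext)
    fix x :: real
    show "poly (2 * (of_nat e * monom 1 e + of_nat (card S - e) * monom 1 (Suc e))) x
      = poly (smult (2 * real (card S)) ([:0,1:] * monom 1 e) + [:0,2,-2:] * pderiv (monom 1 e)) x"
      using \<open>e \<le> card S\<close>
      by (cases e) (simp_all add: pderiv_monom poly_monom of_nat_diff algebra_simps)
  qed
  finally show ?thesis by (simp add: e_def)
qed

lemma pderiv_sum: "pderiv (sum f A) = (\<Sum>x\<in>A. pderiv (f x))"
  using higher_pderiv_sum[of 1 f A] by simp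

lemma smult_sum_right: "smult c (sum f A) = (\<Sum>x\<in>A. smult c (f x))"
  by (induction A rule: infinite_finite_induct) (simp_all add: smult_add_right)

lemma sum_times_UNIV_bool:
  "(\<Sum>t\<in>T \<times> (UNIV :: bool set). f (fst t)) = (\<Sum>x\<in>T. 2 * f x)"
  for f :: "_ \<Rightarrow> 'b::comm_semiring_1"
proof -
  have "(\<Sum>t\<in>T \<times> (UNIV :: bool set). f (fst t)) = (\<Sum>(x, y)\<in>T \<times> (UNIV :: bool set). f x)"
    by (simp add: case_prod_beta)
  also have "\<dots> = (\<Sum>x\<in>T. \<Sum>y\<in>(UNIV :: bool set). f x)"
    by (rule sum.cartesian_product[symmetric])
  finally show ?thesis by (simp add: UNIV_bool mult_2)
qed

fun dB_rec :: "nat \<Rightarrow> real poly" where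
  "dB_rec 0 = 1"
| "dB_rec (Suc 0) = [:0,1:]"
| "dB_rec (Suc (Suc n)) = smult (2 * real (Suc n) + 1) ([:0,1:] * dB_rec (Suc n))
      + [:0,2,-2:] * pderiv (dB_rec (Suc n)) + smult (2 * real (Suc n)) ([:0,1:] * dB_rec n)"

lemma dB_rec_Suc:
  "dB_rec (Suc n) = smult (2 * real n + 1) ([:0,1:] * dB_rec n) + [:0,2,-2:] * pderiv (dB_rec n)
      + smult (2 * real n) ([:0,1:] * dB_rec (n - 1))"
  by (cases n) simp_all

locale max_removal =
  fixes A :: "nat set" and m :: nat
  assumes finite_A: "finite A" and zero_notin: "0 \<notin> A"
    and m_in: "m \<in> A" and m_max: "\<And>i. i \<in> A \<Longrightarrow> i \<le> m"
begin

abbreviation A' :: "nat set" where "A' \<equiv> A - {m}"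

abbreviation signed_max :: "bool \<Rightarrow> int" where "signed_max s \<equiv> if s then int m else - int m"

definition max_entry :: "int set \<Rightarrow> int" where "max_entry S = signed_max (int m \<in> S)"

lemma m_pos: "m > 0"
  using zero_notin m_in by (cases m) auto

lemma signed_set_A'_bounds:
  assumes "signed_set A' S" "x \<in> S"
  shows "- int m < x \<and> x < int m"
proof -
  have "nat \<bar>x\<bar> \<in> A'" "x = int (nat \<bar>x\<bar>) \<or> x = - int (nat \<bar>x\<bar>)"
    using signed_set_mem[OF assms] by blast+
  moreover from this(1) have "nat \<bar>x\<bar> < m" using m_max by force
  ultimately show ?thesis by linarith
qed

lemma signed_max_notin: "signed_set A' S \<Longrightarrow> signed_max s \<notin> S"
  using signed_set_A'_bounds[of S "signed_max s"] by auto

lemma max_entry_mem: "signed_set A S \<Longrightarrow> max_entry S \<in> S"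
  using m_in unfolding signed_set_def max_entry_def by auto

lemma signed_set_remove_max:
  assumes "signed_set A S" shows "signed_set A' (S - {max_entry S})"
proof -
  have "nat \<bar>max_entry S\<bar> = m" by (simp add: max_entry_def)
  then show ?thesis using signed_set_remove[OF assms zero_notin max_entry_mem[OF assms]] by simp
qed

lemma signed_set_insert_max: "signed_set A' S \<Longrightarrow> signed_set A (insert (signed_max s) S)"
  using signed_set_insert[of A' S m "signed_max s"] m_pos m_in by (simp add: insert_absorb)

lemma max_entry_insert: "signed_set A' S \<Longrightarrow> max_entry (insert (signed_max s) S) = signed_max s"
  using signed_max_notin[of S True] m_pos unfolding max_entry_def by auto

definition fixing_max :: "(int set \<times> (int \<Rightarrow> int)) set" where
  "fixing_max = {(S, w) \<in> derangementsB A. w (max_entry S) = max_entry S}"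

definition swapping_max :: "(int set \<times> (int \<Rightarrow> int)) set" where
  "swapping_max = {(S, w) \<in> derangementsB A. w (max_entry S) \<noteq> max_entry S
     \<and> w (w (max_entry S)) = max_entry S \<and> w (max_entry S) > 0}"

text \<open>Here the maximal letter can be cut out of its cycle; this includes a 2-cycle with a
  negative letter, which becomes a (permitted) negative fixed point.\<close>
definition cycling_max :: "(int set \<times> (int \<Rightarrow> int)) set" where
  "cycling_max = {(S, w) \<in> derangementsB A. w (max_entry S) \<noteq> max_entry S
     \<and> \<not> (w (w (max_entry S)) = max_entry S \<and> w (max_entry S) > 0)}"

lemma derangement_poly_split:
  "derangement_poly A = sum weightB fixing_max + sum weightB swapping_max + sum weightB cycling_max"
proof -
  have "derangementsB A = fixing_max \<union> (swapping_max \<union> cycling_max)"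
    "fixing_max \<inter> (swapping_max \<union> cycling_max) = {}" "swapping_max \<inter> cycling_max = {}"
    unfolding fixing_max_def swapping_max_def cycling_max_def by blast+
  moreover have "finite fixing_max" "finite swapping_max" "finite cycling_max"
    using finite_derangementsB[OF finite_A]
    unfolding fixing_max_def swapping_max_def cycling_max_def by (auto intro: finite_subset)
  ultimately show ?thesis
    unfolding derangement_poly_def by (simp add: sum.union_disjoint add.assoc)
qed

fun add_fixed_max :: "int set \<times> (int \<Rightarrow> int) \<Rightarrow> int set \<times> (int \<Rightarrow> int)" where
  "add_fixed_max (S, w) = (insert (- int m) S, w)"

fun del_fixed_max :: "int set \<times> (int \<Rightarrow> int) \<Rightarrow> int set \<times> (int \<Rightarrow> int)" where
  "del_fixed_max (S, w) = (S - {- int m}, w)"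

lemma add_fixed_max:
  assumes "(S, w) \<in> derangementsB A'"
  shows "add_fixed_max (S, w) \<in> fixing_max"
    and "del_fixed_max (add_fixed_max (S, w)) = (S, w)"
    and "weightB (add_fixed_max (S, w)) = [:0,1:] * weightB (S, w)"
proof -
  have S: "signed_set A' S" and wp: "w permutes S" and der: "\<forall>a\<in>S. a > 0 \<longrightarrow> w a \<noteq> a"
    using assms unfolding derangementsB_def by auto
  have new: "- int m \<notin> S" using signed_max_notin[OF S, of False] by simp
  have fix_new: "w (- int m) = - int m" using permutes_not_in[OF wp new] .
  show "del_fixed_max (add_fixed_max (S, w)) = (S, w)" using new by auto
  have "signed_set A (insert (- int m) S)" using signed_set_insert_max[OF S, of False] by simp
  moreover have "max_entry (insert (- int m) S) = - int m" using max_entry_insert[OF S, of False] by simp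
  moreover have "w permutes insert (- int m) S" using permutes_subset[OF wp] by blast
  ultimately show "add_fixed_max (S, w) \<in> fixing_max"
    using fix_new der m_pos unfolding fixing_max_def derangementsB_def by auto
  have "{a \<in> insert (- int m) S. excedanceB w a} = insert (- int m) {a \<in> S. excedanceB w a}"
    using fix_new m_pos by (auto simp: excedanceB_def)
  then have "excB (insert (- int m) S) w = Suc (excB S w)"
    using finite_signed_set[of A' S] finite_A S new by (simp add: excB_eq_card)
  then show "weightB (add_fixed_max (S, w)) = [:0,1:] * weightB (S, w)" by (simp add: monom_Suc)
qed

lemma del_fixed_max:
  assumes "(S, w) \<in> fixing_max"
  shows "del_fixed_max (S, w) \<in> derangementsB A'"
    and "add_fixed_max (del_fixed_max (S, w)) = (S, w)"
proof -
  have S: "signed_set A S" and wp: "w permutes S" and der: "\<forall>a\<in>S. a > 0 \<longrightarrow> w a \<noteq> a"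
    and fx: "w (max_entry S) = max_entry S"
    using assms unfolding fixing_max_def derangementsB_def by auto
  have neg: "max_entry S = - int m"
    using fx der max_entry_mem[OF S] m_pos unfolding max_entry_def by (auto split: if_splits)
  show "add_fixed_max (del_fixed_max (S, w)) = (S, w)"
    using max_entry_mem[OF S] neg by auto
  have "signed_set A' (S - {- int m})" using signed_set_remove_max[OF S] neg by simp
  moreover have "w permutes (S - {- int m})"
    using wp fx neg by (intro permutes_superset[OF wp]) auto
  ultimately show "del_fixed_max (S, w) \<in> derangementsB A'"
    using der unfolding derangementsB_def by auto
qed

lemma sum_fixing_max: "sum weightB fixing_max = [:0,1:] * derangement_poly A'"
proof -
  have "(\<Sum>q\<in>derangementsB A'. [:0,1:] * weightB q) = sum weightB fixing_max"
  proof (rule sum.reindex_bij_witness[where j = add_fixed_max and i = del_fixed_max])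
    fix q assume "q \<in> derangementsB A'"
    then show "del_fixed_max (add_fixed_max q) = q" "add_fixed_max q \<in> fixing_max"
      "weightB (add_fixed_max q) = [:0,1:] * weightB q"
      using add_fixed_max[of "fst q" "snd q"] by (simp_all only: prod.collapse)
  next
    fix p assume "p \<in> fixing_max"
    then show "add_fixed_max (del_fixed_max p) = p" "del_fixed_max p \<in> derangementsB A'"
      using del_fixed_max[of "fst p" "snd p"] by (simp_all only: prod.collapse)
  qed
  then show ?thesis by (simp add: derangement_poly_def sum_distrib_left)
qed

fun add_max_swap ::
  "(nat \<times> int set \<times> (int \<Rightarrow> int)) \<times> bool \<Rightarrow> int set \<times> (int \<Rightarrow> int)" where
  "add_max_swap ((k, S, w), s) =
     (insert (signed_max s) (insert (int k) S), w \<circ> transpose (int k) (signed_max s))"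

fun del_max_swap ::
  "int set \<times> (int \<Rightarrow> int) \<Rightarrow> (nat \<times> int set \<times> (int \<Rightarrow> int)) \<times> bool" where
  "del_max_swap (S, w) =
     ((nat (w (max_entry S)), S - {max_entry S, w (max_entry S)},
       w \<circ> transpose (w (max_entry S)) (max_entry S)), max_entry S > 0)"

lemma excB_insert_max_swap:
  assumes k: "k \<in> A'" and S: "signed_set (A' - {k}) S" and wp: "w permutes S"
  shows "excB (insert (signed_max s) (insert (int k) S)) (w \<circ> transpose (int k) (signed_max s))
    = Suc (excB S w)"
proof -
  have kpos: "k > 0" using k zero_notin by (cases k) auto
  define b where "b = signed_max s"
  define w2 where "w2 = w \<circ> transpose (int k) b"
  have S1: "signed_set A' (insert (int k) S)"
    using signed_set_insert[OF S, of k "int k"] k kpos by (simp add: insert_absorb)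
  have b_new: "b \<notin> insert (int k) S" using signed_max_notin[OF S1] b_def by simp
  have k_new: "int k \<notin> S" using signed_set_mem[OF S] by (metis Diff_iff insertI1 nat_int abs_of_nat)
  have "w (int k) = int k" "w b = b" using permutes_not_in[OF wp] k_new b_new by auto
  then have w2b: "w2 b = int k" and w2k: "w2 (int k) = b" using b_new unfolding w2_def by auto
  have "excedanceB w2 x = excedanceB w x" if "x \<in> S" for x
  proof -
    have "x \<noteq> int k" "x \<noteq> b" using that k_new b_new by auto
    then have "w2 x = w x" unfolding w2_def by simp
    then show ?thesis by (simp add: excedanceB_def)
  qed
  moreover have "excedanceB w2 b \<longleftrightarrow> b < 0" and "excedanceB w2 (int k) \<longleftrightarrow> b > 0"
    using k m_max[of k] w2b w2k b_def kpos m_pos by (auto simp: excedanceB_def)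
  ultimately have "{a \<in> insert b (insert (int k) S). excedanceB w2 a}
      = insert (if b > 0 then int k else b) {a \<in> S. excedanceB w a}"
    using b_def m_pos by auto
  moreover have "(if b > 0 then int k else b) \<notin> S" using k_new b_new by auto
  ultimately have "excB (insert b (insert (int k) S)) w2 = Suc (excB S w)"
    using finite_signed_set[of "A' - {k}" S] finite_A S by (simp add: excB_eq_card)
  then show ?thesis unfolding b_def w2_def .
qed

lemma add_max_swap:
  assumes k: "k \<in> A'" and d: "(S, w) \<in> derangementsB (A' - {k})"
  shows "add_max_swap ((k, S, w), s) \<in> swapping_max"
    and "del_max_swap (add_max_swap ((k, S, w), s)) = ((k, S, w), s)"
    and "weightB (add_max_swap ((k, S, w), s)) = [:0,1:] * weightB (S, w)"
proof -
  have S: "signed_set (A' - {k}) S" and wp: "w permutes S" and der: "\<forall>a\<in>S. a > 0 \<longrightarrow> w a \<noteq> a"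
    using d unfolding derangementsB_def by auto
  have kpos: "k > 0" using k zero_notin by (cases k) auto
  define b where "b = signed_max s"
  define w2 where "w2 = w \<circ> transpose (int k) b"
  have add: "add_max_swap ((k, S, w), s) = (insert b (insert (int k) S), w2)"
    by (simp add: b_def w2_def)
  have S1: "signed_set A' (insert (int k) S)"
    using signed_set_insert[OF S, of k "int k"] k kpos by (simp add: insert_absorb)
  have S2: "signed_set A (insert b (insert (int k) S))"
    using signed_set_insert_max[OF S1] b_def by simp
  have max_b: "max_entry (insert b (insert (int k) S)) = b" using max_entry_insert[OF S1] b_def by simp
  have b_new: "b \<notin> insert (int k) S" using signed_max_notin[OF S1] b_def by simp
  have k_new: "int k \<notin> S" using signed_set_mem[OF S] by (metis Diff_iff insertI1 nat_int abs_of_nat)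
  have fixed: "w (int k) = int k" "w b = b" using permutes_not_in[OF wp] k_new b_new by auto
  have w2b: "w2 b = int k" and w2k: "w2 (int k) = b" using fixed b_new unfolding w2_def by auto
  have w2_other: "x \<noteq> int k \<Longrightarrow> x \<noteq> b \<Longrightarrow> w2 x = w x" for x unfolding w2_def by simp
  have "w2 \<circ> transpose (int k) b = w" "(b > 0) = s" "insert b (insert (int k) S) - {b, int k} = S"
    using m_pos k_new b_new unfolding w2_def b_def by (auto simp: comp_assoc)
  then show "del_max_swap (add_max_swap ((k, S, w), s)) = ((k, S, w), s)"
    unfolding add using max_b w2b by simp
  have "w2 permutes insert b (insert (int k) S)" unfolding w2_def
    by (rule permutes_compose[OF permutes_swap_id permutes_subset[OF wp]]) auto
  moreover have "\<forall>a\<in>insert b (insert (int k) S). a > 0 \<longrightarrow> w2 a \<noteq> a"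
  proof (intro ballI impI)
    fix a assume a: "a \<in> insert b (insert (int k) S)" "a > 0"
    show "w2 a \<noteq> a"
    proof (cases "a = b \<or> a = int k")
      case True
      then show ?thesis using w2b w2k b_new by auto
    next
      case False
      then show ?thesis using a w2_other der by auto
    qed
  qed
  ultimately show "add_max_swap ((k, S, w), s) \<in> swapping_max"
    unfolding add using S2 max_b w2b w2k b_new kpos
    by (simp add: swapping_max_def derangementsB_def)
  have "excB (insert b (insert (int k) S)) w2 = Suc (excB S w)"
    unfolding b_def w2_def by (rule excB_insert_max_swap[OF k S wp])
  then show "weightB (add_max_swap ((k, S, w), s)) = [:0,1:] * weightB (S, w)"
    unfolding add by (simp add: monom_Suc)
qed

lemma del_max_swap:
  assumes "(S, w) \<in> swapping_max"
  shows "del_max_swap (S, w) \<in> (SIGMA k:A'. derangementsB (A' - {k})) \<times> (UNIV :: bool set)"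
    and "add_max_swap (del_max_swap (S, w)) = (S, w)"
proof -
  define b where "b = max_entry S"
  define c where "c = w b"
  have S: "signed_set A S" and wp: "w permutes S" and der: "\<forall>a\<in>S. a > 0 \<longrightarrow> w a \<noteq> a"
    and cb: "c \<noteq> b" and wc: "w c = b" and cpos: "c > 0"
    using assms unfolding swapping_max_def derangementsB_def b_def c_def by auto
  have bS: "b \<in> S" using max_entry_mem[OF S] b_def by simp
  have cS: "c \<in> S" using bS wp c_def by (simp add: permutes_in_image)
  have "signed_max (b > 0) = b" "int (nat c) = c" "w \<circ> transpose c b \<circ> transpose c b = w"
    using b_def cpos m_pos by (auto simp: max_entry_def comp_assoc)
  then show "add_max_swap (del_max_swap (S, w)) = (S, w)"
    using bS cS by (simp add: b_def[symmetric] c_def[symmetric]) (auto simp: max_entry_def)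
  have S1: "signed_set A' (S - {b})" using signed_set_remove_max[OF S] b_def by simp
  have "nat \<bar>c\<bar> = nat c" using cpos by simp
  then have S2: "signed_set (A' - {nat c}) (S - {b, c})" and "nat c \<in> A'"
    using signed_set_remove[OF S1 _, of c] signed_set_mem[OF S1, of c] cS cb zero_notin
    by (auto simp: insert_commute Diff_insert2[symmetric])
  define w2 where "w2 = w \<circ> transpose c b"
  have "w2 permutes S"
    unfolding w2_def by (rule permutes_compose[OF permutes_swap_id[OF cS bS] wp])
  moreover have "w2 c = c" "w2 b = b" using wc c_def unfolding w2_def by auto
  ultimately have "w2 permutes (S - {b, c})"
    using permutes_superset[of w2 S "S - {b, c}"] by auto
  moreover have "\<forall>a\<in>S - {b, c}. a > 0 \<longrightarrow> w2 a \<noteq> a" using der unfolding w2_def by auto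
  ultimately show "del_max_swap (S, w) \<in> (SIGMA k:A'. derangementsB (A' - {k})) \<times> (UNIV :: bool set)"
    using S2 \<open>nat c \<in> A'\<close> unfolding derangementsB_def
    by (simp add: b_def[symmetric] c_def[symmetric] w2_def[symmetric])
qed

lemma sum_swapping_max:
  "sum weightB swapping_max = 2 * (\<Sum>k\<in>A'. [:0,1:] * derangement_poly (A' - {k}))"
proof -
  have "(\<Sum>t\<in>(SIGMA k:A'. derangementsB (A' - {k})) \<times> (UNIV :: bool set).
        [:0,1:] * weightB (snd (fst t))) = sum weightB swapping_max"
  proof (rule sum.reindex_bij_witness[where j = add_max_swap and i = del_max_swap])
    fix t assume "t \<in> (SIGMA k:A'. derangementsB (A' - {k})) \<times> (UNIV :: bool set)"
    then obtain k S w s where t: "t = ((k, S, w), s)"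
      and k: "k \<in> A'" and d: "(S, w) \<in> derangementsB (A' - {k})" by auto
    show "del_max_swap (add_max_swap t) = t" "add_max_swap t \<in> swapping_max"
      "weightB (add_max_swap t) = [:0,1:] * weightB (snd (fst t))"
      using add_max_swap[OF k d, of s] by (simp_all only: t prod.sel)
  next
    fix p assume "p \<in> swapping_max"
    then show "add_max_swap (del_max_swap p) = p"
      "del_max_swap p \<in> (SIGMA k:A'. derangementsB (A' - {k})) \<times> (UNIV :: bool set)"
      using del_max_swap[of "fst p" "snd p"] by (simp_all only: prod.collapse)
  qed
  also have "(\<Sum>t\<in>(SIGMA k:A'. derangementsB (A' - {k})) \<times> (UNIV :: bool set).
        [:0,1:] * weightB (snd (fst t)))
      = (\<Sum>u\<in>(SIGMA k:A'. derangementsB (A' - {k})). 2 * ([:0,1:] * weightB (snd u)))"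
    by (rule sum_times_UNIV_bool)
  also have "\<dots> = (\<Sum>k\<in>A'. \<Sum>q\<in>derangementsB (A' - {k}). 2 * ([:0,1:] * weightB q))"
    using sum.Sigma[of A' "\<lambda>k. derangementsB (A' - {k})" "\<lambda>k q. 2 * ([:0,1:] * weightB q)"]
      finite_A finite_derangementsB by (simp add: case_prod_unfold)
  finally show ?thesis
    by (simp add: derangement_poly_def sum_distrib_left)
qed

fun add_max_cycle ::
  "(int set \<times> (int \<Rightarrow> int)) \<times> int \<times> bool \<Rightarrow> int set \<times> (int \<Rightarrow> int)" where
  "add_max_cycle ((S, w), a, s) = (insert (signed_max s) S, w \<circ> transpose a (signed_max s))"

fun del_max_cycle ::
  "int set \<times> (int \<Rightarrow> int) \<Rightarrow> (int set \<times> (int \<Rightarrow> int)) \<times> int \<times> bool" where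
  "del_max_cycle (S, w) =
     ((S - {max_entry S}, w \<circ> transpose (inv w (max_entry S)) (max_entry S)),
      inv w (max_entry S), max_entry S > 0)"

lemma excB_insert_max_cycle:
  assumes S: "signed_set A' S" and wp: "w permutes S" and aS: "a \<in> S"
  shows "excB (insert (signed_max s) S) (w \<circ> transpose a (signed_max s))
    = Suc (excB S w - (if excedanceB w a then 1 else 0))"
proof -
  define b where "b = signed_max s"
  define w2 where "w2 = w \<circ> transpose a b"
  have b_new: "b \<notin> S" using signed_max_notin[OF S] b_def by simp
  have ab: "a \<noteq> b" using aS b_new by auto
  have "w b = b" using permutes_not_in[OF wp] b_new by auto
  then have w2a: "w2 a = b" and w2b: "w2 b = w a" using ab unfolding w2_def by auto
  have waS: "w a \<in> S" using aS wp by (simp add: permutes_in_image)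
  define E where "E = {x \<in> S - {a}. excedanceB w x}"
  have "finite E" using finite_signed_set[of A' S] finite_A S unfolding E_def by simp
  have "excedanceB w2 x = excedanceB w x" if "x \<in> S - {a}" for x
  proof -
    have "x \<noteq> a" "x \<noteq> b" using that b_new by auto
    then have "w2 x = w x" unfolding w2_def by simp
    then show ?thesis by (simp add: excedanceB_def)
  qed
  moreover have "excedanceB w2 b \<longleftrightarrow> b < 0" and "excedanceB w2 a \<longleftrightarrow> b > 0"
    using w2a w2b signed_set_A'_bounds[OF S aS] signed_set_A'_bounds[OF S waS] b_def m_pos
    by (auto simp: excedanceB_def)
  ultimately have "{x \<in> insert b S. excedanceB w2 x} = insert (if b > 0 then a else b) E"
    using b_def m_pos ab aS unfolding E_def by auto
  moreover have "(if b > 0 then a else b) \<notin> E" using b_new unfolding E_def by auto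
  ultimately have "excB (insert b S) w2 = Suc (card E)"
    using \<open>finite E\<close> by (simp add: excB_eq_card)
  moreover have "{x \<in> S. excedanceB w x} = (if excedanceB w a then insert a E else E)"
    using aS unfolding E_def by auto
  then have "excB S w = card E + (if excedanceB w a then 1 else 0)"
    using \<open>finite E\<close> by (simp add: excB_eq_card E_def)
  ultimately show ?thesis unfolding b_def w2_def by simp
qed

lemma add_max_cycle:
  assumes d: "(S, w) \<in> derangementsB A'" and aS: "a \<in> S"
  shows "add_max_cycle ((S, w), a, s) \<in> cycling_max"
    and "del_max_cycle (add_max_cycle ((S, w), a, s)) = ((S, w), a, s)"
    and "weightB (add_max_cycle ((S, w), a, s)) = insertion_weight (S, w) a"
proof -
  have S: "signed_set A' S" and wp: "w permutes S" and der: "\<forall>x\<in>S. x > 0 \<longrightarrow> w x \<noteq> x"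
    using d unfolding derangementsB_def by auto
  define b where "b = signed_max s"
  define w2 where "w2 = w \<circ> transpose a b"
  have add: "add_max_cycle ((S, w), a, s) = (insert b S, w2)" by (simp add: b_def w2_def)
  have S2: "signed_set A (insert b S)" using signed_set_insert_max[OF S] b_def by simp
  have max_b: "max_entry (insert b S) = b" using max_entry_insert[OF S] b_def by simp
  have b_new: "b \<notin> S" using signed_max_notin[OF S] b_def by simp
  have ab: "a \<noteq> b" using aS b_new by auto
  have "w b = b" using permutes_not_in[OF wp] b_new by auto
  then have w2a: "w2 a = b" and w2b: "w2 b = w a" using ab unfolding w2_def by auto
  have w2_other: "x \<noteq> a \<Longrightarrow> x \<noteq> b \<Longrightarrow> w2 x = w x" for x unfolding w2_def by simp
  have w2p: "w2 permutes insert b S" unfolding w2_def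
    by (rule permutes_compose[OF permutes_swap_id permutes_subset[OF wp]]) (use aS in auto)
  have "inv w2 b = a" using w2a permutes_inv_eq[OF w2p] by simp
  moreover have "w2 \<circ> transpose a b = w" "(b > 0) = s" "insert b S - {b} = S"
    using b_new m_pos unfolding w2_def b_def by (auto simp: comp_assoc)
  ultimately show "del_max_cycle (add_max_cycle ((S, w), a, s)) = ((S, w), a, s)"
    unfolding add using max_b by simp
  have waS: "w a \<in> S" using aS wp by (simp add: permutes_in_image)
  have "\<forall>x\<in>insert b S. x > 0 \<longrightarrow> w2 x \<noteq> x"
  proof (intro ballI impI)
    fix x assume x: "x \<in> insert b S" "x > 0"
    show "w2 x \<noteq> x"
    proof (cases "x = b \<or> x = a")
      case True
      then show ?thesis using w2a w2b waS b_new ab by auto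
    next
      case False
      then show ?thesis using x w2_other der by auto
    qed
  qed
  moreover have "w2 b \<noteq> b" using w2b waS b_new by auto
  moreover have "\<not> (w2 (w2 b) = b \<and> w2 b > 0)"
  proof
    assume "w2 (w2 b) = b \<and> w2 b > 0"
    then have "w2 b = a" "a > 0" using w2a permutes_inj[OF w2p] w2b by (metis injD)+
    then show False using der aS w2b by auto
  qed
  ultimately show "add_max_cycle ((S, w), a, s) \<in> cycling_max"
    unfolding add using S2 w2p max_b by (simp add: cycling_max_def derangementsB_def)
  have "excB (insert b S) w2 = Suc (excB S w - (if excedanceB w a then 1 else 0))"
    unfolding b_def w2_def by (rule excB_insert_max_cycle[OF S wp aS])
  then show "weightB (add_max_cycle ((S, w), a, s)) = insertion_weight (S, w) a"
    unfolding add by simp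
qed

lemma del_max_cycle:
  assumes "(S, w) \<in> cycling_max"
  shows "del_max_cycle (S, w) \<in> (SIGMA q:derangementsB A'. fst q \<times> (UNIV :: bool set))"
    and "add_max_cycle (del_max_cycle (S, w)) = (S, w)"
proof -
  define b where "b = max_entry S"
  define a where "a = inv w b"
  have S: "signed_set A S" and wp: "w permutes S" and der: "\<forall>x\<in>S. x > 0 \<longrightarrow> w x \<noteq> x"
    and wb: "w b \<noteq> b" and not_swap: "\<not> (w (w b) = b \<and> w b > 0)"
    using assms unfolding cycling_max_def derangementsB_def b_def by auto
  have bS: "b \<in> S" using max_entry_mem[OF S] b_def by simp
  have wa: "w a = b" unfolding a_def using permutes_inverses(1)[OF wp] .
  have aS: "a \<in> S" using wa bS wp by (metis permutes_in_image)
  have ab: "a \<noteq> b" using wa wb by auto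
  have "signed_max (b > 0) = b" "w \<circ> transpose a b \<circ> transpose a b = w"
    using b_def m_pos by (auto simp: max_entry_def comp_assoc)
  then show "add_max_cycle (del_max_cycle (S, w)) = (S, w)"
    using bS by (simp add: b_def[symmetric] a_def[symmetric] insert_absorb)
  define w2 where "w2 = w \<circ> transpose a b"
  have "w2 permutes S"
    unfolding w2_def by (rule permutes_compose[OF permutes_swap_id[OF aS bS] wp])
  moreover have "w2 b = b" using wa ab unfolding w2_def by auto
  ultimately have "w2 permutes (S - {b})"
    using permutes_superset[of w2 S "S - {b}"] by auto
  moreover have "\<forall>x\<in>S - {b}. x > 0 \<longrightarrow> w2 x \<noteq> x"
  proof (intro ballI impI)
    fix x assume x: "x \<in> S - {b}" "x > 0"
    show "w2 x \<noteq> x"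
    proof (cases "x = a")
      case True
      then show ?thesis using not_swap wa ab x unfolding w2_def by auto
    next
      case False
      then show ?thesis using der x unfolding w2_def by auto
    qed
  qed
  ultimately show "del_max_cycle (S, w) \<in> (SIGMA q:derangementsB A'. fst q \<times> (UNIV :: bool set))"
    using signed_set_remove_max[OF S] aS ab unfolding derangementsB_def
    by (simp add: b_def[symmetric] a_def[symmetric] w2_def[symmetric])
qed

lemma sum_cycling_max:
  "sum weightB cycling_max = smult (2 * real (card A')) ([:0,1:] * derangement_poly A')
     + [:0,2,-2:] * pderiv (derangement_poly A')"
proof -
  have "(\<Sum>t\<in>(SIGMA q:derangementsB A'. fst q \<times> (UNIV :: bool set)). insertion_weight (fst t) (fst (snd t)))
      = sum weightB cycling_max"
  proof (rule sum.reindex_bij_witness[where j = add_max_cycle and i = del_max_cycle])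
    fix t assume "t \<in> (SIGMA q:derangementsB A'. fst q \<times> (UNIV :: bool set))"
    then obtain S w a s where t: "t = ((S, w), a, s)"
      and d: "(S, w) \<in> derangementsB A'" and a: "a \<in> S" by auto
    show "del_max_cycle (add_max_cycle t) = t" "add_max_cycle t \<in> cycling_max"
      "weightB (add_max_cycle t) = insertion_weight (fst t) (fst (snd t))"
      using add_max_cycle[OF d a, of s] by (simp_all only: t prod.sel)
  next
    fix p assume "p \<in> cycling_max"
    then show "add_max_cycle (del_max_cycle p) = p"
      "del_max_cycle p \<in> (SIGMA q:derangementsB A'. fst q \<times> (UNIV :: bool set))"
      using del_max_cycle[of "fst p" "snd p"] by (simp_all only: prod.collapse)
  qed
  also have "(\<Sum>t\<in>(SIGMA q:derangementsB A'. fst q \<times> (UNIV :: bool set)).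
        insertion_weight (fst t) (fst (snd t)))
      = (\<Sum>q\<in>derangementsB A'. \<Sum>r\<in>fst q \<times> (UNIV :: bool set). insertion_weight q (fst r))"
  proof -
    have "\<forall>q\<in>derangementsB A'. finite (fst q \<times> (UNIV :: bool set))"
      using finite_signed_set[of A'] finite_A unfolding derangementsB_def by auto
    then show ?thesis
      using sum.Sigma[of "derangementsB A'" "\<lambda>q. fst q \<times> (UNIV :: bool set)"
          "\<lambda>q r. insertion_weight q (fst r)"] finite_derangementsB[of A'] finite_A
      by (simp add: case_prod_unfold)
  qed
  also have "\<dots> = (\<Sum>q\<in>derangementsB A'. \<Sum>a\<in>fst q. 2 * insertion_weight q a)"
    by (simp only: sum_times_UNIV_bool)
  also have "\<dots> = (\<Sum>q\<in>derangementsB A'. smult (2 * real (card A')) ([:0,1:] * weightB q)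
      + [:0,2,-2:] * pderiv (weightB q))"
  proof (rule sum.cong)
    fix q assume "q \<in> derangementsB A'"
    then obtain S w where q: "q = (S, w)" and S: "signed_set A' S"
      unfolding derangementsB_def by auto
    then have "finite S" "card S = card A'"
      using finite_signed_set[of A' S] card_signed_set[of A' S] finite_A zero_notin by auto
    then show "(\<Sum>a\<in>fst q. 2 * insertion_weight q a) = smult (2 * real (card A')) ([:0,1:] * weightB q)
      + [:0,2,-2:] * pderiv (weightB q)"
      using sum_insertion_weight[of S w] q by simp
  qed simp
  also have "\<dots> = smult (2 * real (card A')) ([:0,1:] * derangement_poly A')
     + [:0,2,-2:] * pderiv (derangement_poly A')"
    by (simp only: derangement_poly_def sum.distrib pderiv_sum sum_distrib_left smult_sum_right)
  finally show ?thesis by (rule sym)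
qed

end

theorem derangement_poly_eq_dB_rec:
  assumes "finite A" "0 \<notin> A"
  shows "derangement_poly A = dB_rec (card A)"
  using assms
proof (induction "card A" arbitrary: A rule: less_induct)
  case less
  show ?case
  proof (cases "A = {}")
    case True
    then show ?thesis by (simp add: derangement_poly_def derangementsB_empty excB_def)
  next
    case False
    interpret max_removal A "Max A"
      using less.prems False by unfold_locales auto
    define n where "n = card A'"
    have card_A: "card A = Suc n" using finite_A m_in unfolding n_def by (metis card_Suc_Diff1)
    have IH: "derangement_poly B = dB_rec (card B)" if "B \<subseteq> A'" for B
    proof -
      have "card B \<le> n" using that finite_A unfolding n_def by (simp add: card_mono)
      moreover have "finite B" "0 \<notin> B" using that finite_A zero_notin by (auto intro: finite_subset)
      ultimately show ?thesis using less.hyps card_A by simp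
    qed
    have "(\<Sum>k\<in>A'. [:0,1:] * derangement_poly (A' - {k})) = (\<Sum>k\<in>A'. [:0,1:] * dB_rec (n - 1))"
      using IH finite_A unfolding n_def by (intro sum.cong) auto
    then have "derangement_poly A = [:0,1:] * dB_rec n
        + 2 * (of_nat n * ([:0,1:] * dB_rec (n - 1)))
        + (smult (2 * real n) ([:0,1:] * dB_rec n) + [:0,2,-2:] * pderiv (dB_rec n))"
      using derangement_poly_split sum_fixing_max sum_swapping_max sum_cycling_max IH[of A']
      unfolding n_def by simp
    also have "\<dots> = dB_rec (Suc n)"
      by (rule poly_ext) (simp add: dB_rec_Suc algebra_simps)
    finally show ?thesis using card_A by simp
  qed
qed

lemma dB_eq_dB_rec: "dB n = dB_rec n"
proof (cases "n = 0")
  case True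
  then show ?thesis by (simp add: dB_def)
next
  case False
  then show ?thesis
    using dB_eq_derangement_poly derangement_poly_eq_dB_rec[of "{1..n}"] by simp
qed

definition pderiv_coeffs :: "real poly fps \<Rightarrow> real poly fps" where
  "pderiv_coeffs F = Abs_fps (\<lambda>n. pderiv (F $ n))"

lemma pderiv_coeffs_nth [simp]: "pderiv_coeffs F $ n = pderiv (F $ n)"
  by (simp add: pderiv_coeffs_def)

lemma pderiv_coeffs_diff: "pderiv_coeffs (F - G) = pderiv_coeffs F - pderiv_coeffs G"
  by (simp add: fps_eq_iff pderiv_diff)

lemma pderiv_coeffs_const: "pderiv_coeffs (fps_const c) = fps_const (pderiv c)"
  by (simp add: fps_eq_iff)

lemma pderiv_coeffs_mult: "pderiv_coeffs (F * G) = pderiv_coeffs F * G + F * pderiv_coeffs G"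
proof (rule fps_ext)
  fix n
  have "pderiv_coeffs (F * G) $ n = (\<Sum>i=0..n. pderiv (F $ i * G $ (n - i)))"
    by (simp add: fps_mult_nth pderiv_sum)
  also have "\<dots> = (\<Sum>i=0..n. pderiv (F $ i) * G $ (n - i) + F $ i * pderiv (G $ (n - i)))"
    by (rule sum.cong) (simp_all add: pderiv_mult algebra_simps)
  also have "\<dots> = (pderiv_coeffs F * G + F * pderiv_coeffs G) $ n"
    by (simp add: fps_mult_nth sum.distrib)
  finally show "pderiv_coeffs (F * G) $ n = (pderiv_coeffs F * G + F * pderiv_coeffs G) $ n" .
qed

definition pde_op :: "real poly fps \<Rightarrow> real poly fps" where
  "pde_op F = fps_deriv F - fps_const [:0,2:] * (fps_X * fps_deriv F)
     - fps_const [:0,2,-2:] * pderiv_coeffs F"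

abbreviation x_fps :: "real poly fps" where "x_fps \<equiv> fps_const [:0,1:]"

lemma pde_op_diff: "pde_op (F - G) = pde_op F - pde_op G"
  by (simp add: pde_op_def pderiv_coeffs_diff algebra_simps)

lemma pde_op_mult: "pde_op (F * G) = pde_op F * G + F * pde_op G"
  by (simp add: pde_op_def pderiv_coeffs_mult algebra_simps)

lemma pde_op_const: "pde_op (fps_const c) = - fps_const ([:0,2,-2:] * pderiv c)"
  by (simp add: pde_op_def pderiv_coeffs_const)

lemma of_nat_mult_poly: "of_nat k * (p :: real poly) = smult (of_nat k) p"
  by (rule poly_ext) simp

lemma fps_const_numeral_poly: "fps_const [:numeral k:] = (numeral k :: real poly fps)"
  by (simp add: fps_numeral_fps_const numeral_poly)

lemma fps_const_numeral_x: "fps_const [:0, numeral k:] = numeral k * x_fps"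
proof -
  have "[:0, numeral k:] = [:numeral k:] * [:0,1::real:]" by simp
  then have "fps_const [:0, numeral k:] = fps_const [:numeral k:] * x_fps"
    by (simp only: fps_const_mult)
  then show ?thesis by (simp only: fps_const_numeral_poly)
qed

lemma fps_const_two_x_one_minus_x: "fps_const [:0,2,-2:] = 2 * x_fps - 2 * x_fps^2"
proof -
  have "[:0,2,-2:] = [:0,2:] - [:2:] * ([:0,1:] * [:0,1::real:])" by simp
  then have "fps_const [:0,2,-2:] = fps_const [:0,2:] - fps_const [:2:] * (x_fps * x_fps)"
    by (simp only: fps_const_sub fps_const_mult)
  then show ?thesis by (simp only: fps_const_numeral_x fps_const_numeral_poly power2_eq_square)
qed

definition fps_exp_poly :: "real poly \<Rightarrow> real poly fps" where
  "fps_exp_poly c = Abs_fps (\<lambda>n. smult (1 / fact n) (c ^ n))"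

lemma fps_exp_poly_nth [simp]: "fps_exp_poly c $ n = smult (1 / fact n) (c ^ n)"
  by (simp add: fps_exp_poly_def)

lemma pde_op_fps_exp_poly:
  "pde_op (fps_exp_poly c)
     = fps_const c * fps_exp_poly c
       - fps_const ([:0,2:] * c + [:0,2,-2:] * pderiv c) * (fps_X * fps_exp_poly c)"
proof -
  have deriv: "fps_deriv (fps_exp_poly c) = fps_const c * fps_exp_poly c"
  proof (rule fps_ext)
    fix n
    show "fps_deriv (fps_exp_poly c) $ n = (fps_const c * fps_exp_poly c) $ n"
      by (rule poly_ext) (simp add: of_nat_mult_poly field_simps del: of_nat_Suc)
  qed
  have pderiv: "pderiv_coeffs (fps_exp_poly c) = fps_const (pderiv c) * (fps_X * fps_exp_poly c)"
  proof (rule fps_ext)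
    fix n
    show "pderiv_coeffs (fps_exp_poly c) $ n = (fps_const (pderiv c) * (fps_X * fps_exp_poly c)) $ n"
    proof (cases n)
      case 0
      then show ?thesis by simp
    next
      case (Suc k)
      show ?thesis unfolding Suc
        by (rule poly_ext)
          (simp add: pderiv_smult pderiv_power_Suc field_simps del: of_nat_Suc power_Suc)
    qed
  qed
  show ?thesis
    by (simp add: pde_op_def deriv pderiv algebra_simps fps_const_add[symmetric]
        fps_const_mult[symmetric] del: fps_const_add fps_const_mult mult_pCons_left mult_pCons_right)
qed

lemma pde_op_exp_2x: "pde_op (fps_exp_poly [:0,2:]) = (2 * x_fps - 4 * x_fps * fps_X) * fps_exp_poly [:0,2:]"
proof -
  have "[:0,2:] * [:0,2:] + [:0,2,-2:] * pderiv [:0,2:] = [:0,4::real:]"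
    by (simp add: pderiv_pCons)
  then show ?thesis
    unfolding pde_op_fps_exp_poly by (simp only: fps_const_numeral_x) (simp add: algebra_simps)
qed

lemma pde_op_exp_2: "pde_op (fps_exp_poly [:2:]) = (2 - 4 * x_fps * fps_X) * fps_exp_poly [:2:]"
proof -
  have "[:0,2:] * [:2:] + [:0,2,-2:] * pderiv [:2:] = [:0,4::real:]"
    by (simp add: pderiv_pCons)
  then show ?thesis
    unfolding pde_op_fps_exp_poly
    by (simp only: fps_const_numeral_x fps_const_numeral_poly) (simp add: algebra_simps)
qed

lemma pde_op_exp_x: "pde_op (fps_exp_poly [:0,1:]) = (x_fps - 2 * x_fps * fps_X) * fps_exp_poly [:0,1:]"
proof -
  have "[:0,2:] * [:0,1:] + [:0,2,-2:] * pderiv [:0,1:] = [:0,2::real:]"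
    by (simp add: pderiv_pCons)
  then show ?thesis
    unfolding pde_op_fps_exp_poly by (simp only: fps_const_numeral_x) (simp add: algebra_simps)
qed

lemma pde_op_x: "pde_op x_fps = 2 * x_fps^2 - 2 * x_fps"
proof -
  have "pde_op x_fps = - fps_const [:0,2,-2:]"
    using pde_op_const[of "[:0,1:]"] by (simp add: pderiv_pCons)
  then show ?thesis by (simp only: fps_const_two_x_one_minus_x) (simp add: algebra_simps)
qed

definition dB_rec_egf :: "real poly fps" where
  "dB_rec_egf = Abs_fps (\<lambda>n. smult (1 / fact n) (dB_rec n))"

lemma pde_op_dB_rec_egf: "pde_op dB_rec_egf = x_fps * (1 + 2 * fps_X) * dB_rec_egf"
proof -
  have "pde_op dB_rec_egf $ n = (x_fps * dB_rec_egf + fps_const [:0,2:] * (fps_X * dB_rec_egf)) $ n" for n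
  proof (cases n)
    case 0
    then show ?thesis by (simp add: pde_op_def dB_rec_egf_def)
  next
    case (Suc k)
    show ?thesis
      unfolding Suc pde_op_def fps_sub_nth fps_add_nth fps_mult_left_const_nth fps_X_mult_nth
      by (rule poly_ext)
        (simp add: dB_rec_egf_def of_nat_mult_poly pderiv_smult field_simps del: of_nat_Suc)
  qed
  moreover have "x_fps * (1 + 2 * fps_X) * dB_rec_egf = x_fps * dB_rec_egf + fps_const [:0,2:] * (fps_X * dB_rec_egf)"
    by (simp only: fps_const_numeral_x) (simp add: algebra_simps)
  ultimately show ?thesis by (simp add: fps_eq_iff)
qed

text \<open>Coefficient \<open>n\<close> of the equation determines coefficient \<open>n + 1\<close> of \<open>G\<close>.\<close>
lemma pde_op_solution_unique:
  assumes eq: "pde_op G = x_fps * (3 - 2 * fps_X) * G" and "G $ 0 = 0"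
  shows "G = 0"
proof -
  have rhs: "x_fps * (3 - 2 * fps_X) * G = fps_const [:0,3:] * G - fps_const [:0,2:] * (fps_X * G)"
    by (simp only: fps_const_numeral_x) (simp add: algebra_simps)
  have "G $ n = 0" for n
  proof (induction n rule: less_induct)
    case (less n)
    show ?case
    proof (cases n)
      case 0
      then show ?thesis using \<open>G $ 0 = 0\<close> by simp
    next
      case (Suc k)
      have "G $ k = 0" "G $ (k - 1) = 0" using less Suc by simp_all
      moreover have "pde_op G $ k = (fps_const [:0,3:] * G - fps_const [:0,2:] * (fps_X * G)) $ k"
        using eq rhs by simp
      ultimately have "of_nat (Suc k) * G $ Suc k = 0"
        unfolding pde_op_def fps_sub_nth fps_add_nth fps_mult_left_const_nth fps_X_mult_nth
          fps_deriv_nth pderiv_coeffs_nth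
        by (simp split: if_splits)
      then show ?thesis using Suc by (simp add: of_nat_poly del: of_nat_Suc)
    qed
  qed
  then show ?thesis by (simp add: fps_eq_iff)
qed

definition denom_egf :: "real poly fps" where
  "denom_egf = fps_exp_poly [:0,2:] - x_fps * fps_exp_poly [:2:]"

definition numer_egf :: "real poly fps" where
  "numer_egf = (1 - x_fps) * fps_exp_poly [:0,1:]"

lemma denom_egf_mult_dB_rec_egf: "denom_egf * dB_rec_egf = numer_egf"
proof -
  have pde_denom: "pde_op denom_egf = 2 * x_fps * (1 - 2 * fps_X) * denom_egf"
    unfolding denom_egf_def pde_op_diff pde_op_mult pde_op_exp_2x pde_op_exp_2 pde_op_x
    by (simp add: algebra_simps power2_eq_square)
  have "pde_op 1 = 0" using pde_op_const[of 1] by simp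
  then have pde_numer: "pde_op numer_egf = x_fps * (3 - 2 * fps_X) * numer_egf"
    unfolding numer_egf_def pde_op_diff pde_op_mult pde_op_exp_x pde_op_x
    by (simp add: algebra_simps power2_eq_square
        del: fps_const_mult fps_const_add fps_const_sub fps_const_neg)
  define G where "G = denom_egf * dB_rec_egf - numer_egf"
  have "pde_op G = x_fps * (3 - 2 * fps_X) * G"
    unfolding G_def pde_op_diff pde_op_mult pde_denom pde_numer pde_op_dB_rec_egf
    by (simp add: algebra_simps)
  moreover have "G $ 0 = 0"
    unfolding G_def denom_egf_def numer_egf_def dB_rec_egf_def by (simp add: fps_mult_nth one_pCons)
  ultimately have "G = 0" by (rule pde_op_solution_unique)
  then show ?thesis unfolding G_def by simp
qed

definition fps_eval_coeffs :: "real \<Rightarrow> real poly fps \<Rightarrow> real fps" where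
  "fps_eval_coeffs x F = Abs_fps (\<lambda>n. poly (F $ n) x)"

lemma fps_eval_coeffs_nth [simp]: "fps_eval_coeffs x F $ n = poly (F $ n) x"
  by (simp add: fps_eval_coeffs_def)

lemma fps_eval_coeffs_mult: "fps_eval_coeffs x (F * G) = fps_eval_coeffs x F * fps_eval_coeffs x G"
  by (simp add: fps_eq_iff fps_mult_nth poly_sum)

lemma fps_eval_coeffs_diff: "fps_eval_coeffs x (F - G) = fps_eval_coeffs x F - fps_eval_coeffs x G"
  by (simp add: fps_eq_iff)

lemma fps_eval_coeffs_const: "fps_eval_coeffs x (fps_const c) = fps_const (poly c x)"
  by (simp add: fps_eq_iff)

lemma fps_eval_coeffs_one: "fps_eval_coeffs x 1 = 1"
  by (simp add: fps_eq_iff)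

lemma fps_eval_coeffs_exp_poly: "fps_eval_coeffs x (fps_exp_poly c) = fps_exp (poly c x)"
  by (simp add: fps_eq_iff)

theorem dB_egf:
  "(fps_exp (2 * x) - fps_const x * fps_exp 2) * Abs_fps (\<lambda>n. poly (dB n) x / fact n)
     = fps_const (1 - x) * fps_exp x"
proof -
  have "fps_eval_coeffs x (denom_egf * dB_rec_egf) = fps_eval_coeffs x numer_egf"
    by (simp only: denom_egf_mult_dB_rec_egf)
  moreover have "fps_eval_coeffs x dB_rec_egf = Abs_fps (\<lambda>n. poly (dB n) x / fact n)"
    by (simp add: fps_eq_iff dB_rec_egf_def dB_eq_dB_rec)
  ultimately show ?thesis
    unfolding denom_egf_def numer_egf_def fps_eval_coeffs_mult fps_eval_coeffs_diff
      fps_eval_coeffs_const fps_eval_coeffs_exp_poly fps_eval_coeffs_one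
    by (simp add: mult.commute)
qed

lemma degree_dB: "degree (dB n) \<le> n"
  unfolding dB_eq_dB_rec
proof (induction n rule: dB_rec.induct)
  case (3 n)
  have "degree (smult (2 * real (Suc n) + 1) ([:0,1:] * dB_rec (Suc n))) \<le> Suc (Suc n)"
    by (rule order.trans[OF degree_smult_le]) (use 3 degree_mult_le[of "[:0,1:]" "dB_rec (Suc n)"] in simp)
  moreover have "degree ([:0,2,-2:] * pderiv (dB_rec (Suc n))) \<le> Suc (Suc n)"
    using degree_mult_le[of "[:0,2,-2:]" "pderiv (dB_rec (Suc n))"] degree_pderiv[of "dB_rec (Suc n)"] 3
    by simp
  moreover have "degree (smult (2 * real (Suc n)) ([:0,1:] * dB_rec n)) \<le> Suc (Suc n)"
    by (rule order.trans[OF degree_smult_le]) (use 3 degree_mult_le[of "[:0,1:]" "dB_rec n"] in simp)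
  ultimately show ?case by (simp only: dB_rec.simps) (intro degree_add_le)
qed simp_all

definition dB_reflected :: "nat \<Rightarrow> real poly" where
  "dB_reflected n = monom 1 (Suc n - degree (dB n)) * reflect_poly (dB n)"

lemma poly_dB_reflected: "x \<noteq> 0 \<Longrightarrow> poly (dB_reflected n) x = x ^ Suc n * poly (dB n) (1 / x)"
proof -
  assume x: "x \<noteq> 0"
  have "poly (dB_reflected n) x
      = x ^ (Suc n - degree (dB n)) * (x ^ degree (dB n) * poly (dB n) (inverse x))"
    unfolding dB_reflected_def by (simp add: poly_monom poly_reflect_poly_nz[OF x])
  also have "\<dots> = x ^ Suc n * poly (dB n) (1 / x)"
    using degree_dB[of n]
    by (simp add: mult.assoc[symmetric] power_add[symmetric] inverse_eq_divide)
  finally show ?thesis .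
qed

lemma poly_dB_reflected_0: "poly (dB_reflected n) 0 = 0"
  using degree_dB[of n] unfolding dB_reflected_def by (simp add: poly_monom)

text \<open>Since \<open>f\<^sup>+\<^sub>n + f\<^sup>-\<^sub>n = d\<^sub>n\<close> and \<open>x\<^sup>n\<^sup>+\<^sup>1 d\<^sub>n(1/x) = x f\<^sup>+\<^sub>n + f\<^sup>-\<^sub>n\<close>,
  the difference of the two is \<open>(x - 1) f\<^sup>+\<^sub>n\<close>.\<close>
definition fplus_poly :: "nat \<Rightarrow> real poly" where
  "fplus_poly n = (dB_reflected n - dB n) div [:-1,1:]"

definition fminus_poly :: "nat \<Rightarrow> real poly" where
  "fminus_poly n = dB n - fplus_poly n"

lemma poly_fplus_poly:
  "(x - 1) * poly (fplus_poly n) x = poly (dB_reflected n) x - poly (dB n) x"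
proof -
  have "poly (dB_reflected n - dB n) 1 = 0" using poly_dB_reflected[of 1 n] by simp
  then have "[:-1,1:] dvd (dB_reflected n - dB n)"
    using poly_eq_0_iff_dvd[of "dB_reflected n - dB n" 1] by simp
  then have "[:-1,1:] * fplus_poly n = dB_reflected n - dB n"
    unfolding fplus_poly_def by (rule dvd_mult_div_cancel)
  then have "poly ([:-1,1:] * fplus_poly n) x = poly (dB_reflected n - dB n) x" by simp
  then show ?thesis by (simp add: algebra_simps)
qed

lemma fplus_poly_palindromic:
  assumes x: "x \<noteq> 0"
  shows "poly (fplus_poly n) x = x ^ n * poly (fplus_poly n) (1 / x)"
proof (cases "x = 1")
  case False
  define a where "a = poly (fplus_poly n) (1 / x)"
  define b where "b = poly (dB n) x"
  define c where "c = poly (dB n) (1 / x)"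
  define u where "u = x ^ n"
  have r1: "(x - 1) * poly (fplus_poly n) x = x * u * c - b"
    using poly_fplus_poly[of x n] poly_dB_reflected[OF x] unfolding b_def c_def u_def by simp
  have r2: "(1 / x - 1) * a = (1 / x) ^ Suc n * b - c"
    using poly_fplus_poly[of "1 / x" n] poly_dB_reflected[of "1 / x" n] x
    unfolding a_def b_def c_def by simp
  have e1: "x * u * (1 / x - 1) = u * (1 - x)" and e2: "x * u * (1 / x) ^ Suc n = 1"
    using x unfolding u_def by (simp_all add: power_one_over field_simps)
  have "u * (1 - x) * a = x * u * (1 / x - 1) * a" by (simp only: e1)
  also have "\<dots> = x * u * ((1 / x) ^ Suc n * b - c)" using r2 by (simp only: mult.assoc)
  also have "\<dots> = (x * u * (1 / x) ^ Suc n) * b - x * u * c" by (simp add: algebra_simps)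
  also have "\<dots> = b - x * u * c" by (simp only: e2 mult_1_left)
  finally have "u * (1 - x) * a = b - x * u * c" .
  with r1 have "(1 - x) * (u * a) = (1 - x) * poly (fplus_poly n) x" by (simp add: algebra_simps)
  with False show ?thesis unfolding u_def a_def by simp
qed simp

lemma fminus_poly_palindromic:
  assumes x: "x \<noteq> 0"
  shows "poly (fminus_poly n) x = x ^ (n + 1) * poly (fminus_poly n) (1 / x)"
proof -
  have "x ^ (n + 1) * poly (fminus_poly n) (1 / x)
      = x ^ Suc n * poly (dB n) (1 / x) - x * (x ^ n * poly (fplus_poly n) (1 / x))"
    unfolding fminus_poly_def by (simp add: algebra_simps)
  also have "\<dots> = poly (fminus_poly n) x"
    using poly_fplus_poly[of x n] poly_dB_reflected[OF x] fplus_poly_palindromic[OF x, symmetric]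
    unfolding fminus_poly_def by (simp add: algebra_simps)
  finally show ?thesis by simp
qed

lemma poly_eq_0_if_cofinite_roots:
  fixes r :: "'a::{idom, ring_char_0} poly"
  assumes "finite F" "\<And>x. x \<notin> F \<Longrightarrow> poly r x = 0"
  shows "r = 0"
proof (rule ccontr)
  assume "r \<noteq> 0"
  then have "finite {x. poly r x = 0}" by (rule poly_roots_finite)
  moreover have "UNIV - F \<subseteq> {x. poly r x = 0}" using assms(2) by auto
  ultimately have "finite (UNIV - F)" by (rule finite_subset[rotated])
  then have "finite (UNIV :: 'a set)" using assms(1) by simp
  then show False using infinite_UNIV_char_0 by blast
qed

lemma fpm_eq: "fpm n = (fplus_poly n, fminus_poly n)"
  unfolding fpm_def
proof (rule the_equality)
  have "dB n = fplus_poly n + fminus_poly n" by (simp add: fminus_poly_def)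
  then show "case (fplus_poly n, fminus_poly n) of (p, q) \<Rightarrow> dB n = p + q
      \<and> (\<forall>x::real. x \<noteq> 0 \<longrightarrow> poly p x = x ^ n * poly p (1 / x))
      \<and> (\<forall>x::real. x \<noteq> 0 \<longrightarrow> poly q x = x ^ (n + 1) * poly q (1 / x))"
    unfolding prod.case using fplus_poly_palindromic fminus_poly_palindromic by blast
next
  fix z assume pq: "case z of (p, q) \<Rightarrow> dB n = p + q
      \<and> (\<forall>x::real. x \<noteq> 0 \<longrightarrow> poly p x = x ^ n * poly p (1 / x))
      \<and> (\<forall>x::real. x \<noteq> 0 \<longrightarrow> poly q x = x ^ (n + 1) * poly q (1 / x))"
  obtain p q where z: "z = (p, q)" by (cases z)
  from pq have sum: "dB n = p + q"
    and p: "\<And>x. x \<noteq> 0 \<Longrightarrow> poly p x = x ^ n * poly p (1 / x)"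
    and q: "\<And>x. x \<noteq> 0 \<Longrightarrow> poly q x = x ^ (n + 1) * poly q (1 / x)"
    unfolding z prod.case by blast+
  text \<open>\<open>r\<close> is palindromic of both degrees \<open>n\<close> and \<open>n + 1\<close>, so it vanishes off \<open>{0, 1}\<close>.\<close>
  define r where "r = p - fplus_poly n"
  have "r = 0"
  proof (rule poly_eq_0_if_cofinite_roots[of "{0, 1}"])
    fix x :: real assume "x \<notin> {0, 1}"
    then have x0: "x \<noteq> 0" and x1: "x \<noteq> 1" by auto
    have "poly (q - fminus_poly n) x = x ^ (n + 1) * poly (q - fminus_poly n) (1 / x)"
      using q[OF x0] fminus_poly_palindromic[OF x0] by (simp add: algebra_simps)
    moreover have "q - fminus_poly n = - r" unfolding r_def fminus_poly_def sum by simp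
    ultimately have "poly r x = x * (x ^ n * poly r (1 / x))" by simp
    moreover have "poly r x = x ^ n * poly r (1 / x)"
      unfolding r_def using p[OF x0] fplus_poly_palindromic[OF x0] by (simp add: algebra_simps)
    ultimately have "(1 - x) * poly r x = 0" by (simp add: algebra_simps)
    with x1 show "poly r x = 0" by simp
  qed simp
  then show "z = (fplus_poly n, fminus_poly n)"
    unfolding z r_def fminus_poly_def sum by simp
qed

lemma fplus_egf:
  fixes x :: real
  assumes x1: "x \<noteq> 1"
  shows "Abs_fps (\<lambda>n. poly (fplus_poly n) x / fact n) * (fps_exp (2 * x) - fps_const x * fps_exp 2)
       = fps_exp x - fps_const x * fps_exp 1"
proof (cases "x = 0")
  case True
  have "Abs_fps (\<lambda>n. poly (fplus_poly n) 0 / fact n) = Abs_fps (\<lambda>n. poly (dB n) 0 / fact n)"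
    using poly_fplus_poly[of 0] poly_dB_reflected_0 by (simp add: fps_eq_iff)
  then show ?thesis using True dB_egf[of 0] by (simp add: mult.commute)
next
  case False
  have "x - 1 \<noteq> 0" using x1 by simp
  define D where "D y = Abs_fps (\<lambda>n. poly (dB n) y / fact n)" for y
  define E where "E = fps_exp (2 * x) - fps_const x * fps_exp 2"
  define Z where "Z = D (1 / x) oo (fps_const x * fps_X)"
  text \<open>Substitute \<open>1/x\<close> for \<open>x\<close> and \<open>xt\<close> for \<open>t\<close> in the identity for \<open>D\<close>.\<close>
  have "(fps_exp 2 - fps_const (1 / x) * fps_exp (2 * x)) * Z
      = ((fps_exp (2 * (1 / x)) - fps_const (1 / x) * fps_exp 2) * D (1 / x)) oo (fps_const x * fps_X)"
    unfolding Z_def using False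
    by (simp add: fps_compose_mult_distrib fps_compose_sub_distrib mult.commute[of x 2])
  also have "\<dots> = (fps_const (1 - 1 / x) * fps_exp (1 / x)) oo (fps_const x * fps_X)"
    unfolding D_def by (rule arg_cong[OF dB_egf])
  also have "\<dots> = fps_const (1 - 1 / x) * fps_exp 1"
    using False by (simp add: fps_compose_mult_distrib)
  finally have EZ': "(fps_exp 2 - fps_const (1 / x) * fps_exp (2 * x)) * Z
      = fps_const (1 - 1 / x) * fps_exp 1" .
  have "E = fps_const (- x) * (fps_exp 2 - fps_const (1 / x) * fps_exp (2 * x))"
    unfolding E_def using False by (simp add: fps_eq_iff field_simps)
  then have "E * Z = fps_const (- x) * (fps_const (1 - 1 / x) * fps_exp 1)"
    by (simp only: mult.assoc EZ')
  also have "\<dots> = fps_const (1 - x) * fps_exp 1"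
    using False by (simp add: fps_eq_iff field_simps)
  finally have EZ: "E * Z = fps_const (1 - x) * fps_exp 1" .
  have ED: "E * D x = fps_const (1 - x) * fps_exp x"
    unfolding E_def D_def by (rule dB_egf)
  have Fp: "Abs_fps (\<lambda>n. poly (fplus_poly n) x / fact n) = fps_const (1 / (x - 1)) * (fps_const x * Z - D x)"
  proof (rule fps_ext)
    fix n
    have "(x - 1) * poly (fplus_poly n) x = x * (x ^ n * poly (dB n) (1 / x)) - poly (dB n) x"
      using poly_fplus_poly[of x n] poly_dB_reflected[OF False] by simp
    then have "poly (fplus_poly n) x = (x * (x ^ n * poly (dB n) (1 / x)) - poly (dB n) x) / (x - 1)"
      using \<open>x - 1 \<noteq> 0\<close> by (simp add: eq_divide_eq mult.commute)
    then show "Abs_fps (\<lambda>n. poly (fplus_poly n) x / fact n) $ n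
        = (fps_const (1 / (x - 1)) * (fps_const x * Z - D x)) $ n"
      unfolding Z_def D_def by (simp add: diff_divide_distrib) (simp add: mult.commute)
  qed
  have "Abs_fps (\<lambda>n. poly (fplus_poly n) x / fact n) * E
      = fps_const (1 / (x - 1)) * (fps_const x * (E * Z) - E * D x)"
    unfolding Fp by (simp add: algebra_simps)
  also have "\<dots> = fps_const (1 / (x - 1) * (1 - x)) * (fps_const x * fps_exp 1 - fps_exp x)"
    unfolding EZ ED by (simp add: algebra_simps)
  also have "\<dots> = fps_exp x - fps_const x * fps_exp 1"
  proof -
    have "1 / (x - 1) * (1 - x) = -1" using \<open>x - 1 \<noteq> 0\<close> by (simp add: field_simps)
    then show ?thesis by (simp add: fps_eq_iff)
  qed
  finally show ?thesis unfolding E_def .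
qed

lemma fplus_eq: "fplus n = fplus_poly n" and fminus_eq: "fminus n = fminus_poly n"
  unfolding fplus_def fminus_def fpm_eq by (rule fst_conv snd_conv)+

theorem proposition3p2:
  fixes x :: real
  assumes "x \<noteq> 1"
  shows "Abs_fps (\<lambda>n. poly (fplus n) x / fact n)
           = (fps_exp x - fps_const x * fps_exp 1)
             / (fps_exp (2 * x) - fps_const x * fps_exp 2)
         \<and> Abs_fps (\<lambda>n. poly (fminus n) x / fact n)
           = fps_const x * (fps_exp 1 - fps_exp x)
             / (fps_exp (2 * x) - fps_const x * fps_exp 2)"
proof -
  define E where "E = fps_exp (2 * x) - fps_const x * fps_exp 2"
  define D where "D = Abs_fps (\<lambda>n. poly (dB n) x / fact n)"
  define Fp where "Fp = Abs_fps (\<lambda>n. poly (fplus_poly n) x / fact n)"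
  define Fm where "Fm = Abs_fps (\<lambda>n. poly (fminus_poly n) x / fact n)"
  have "E $ 0 \<noteq> 0" using assms unfolding E_def by simp
  then have "E \<noteq> 0" by auto
  have plus: "Fp * E = fps_exp x - fps_const x * fps_exp 1"
    unfolding Fp_def E_def using fplus_egf[OF assms] .
  have "Fm = D - Fp"
    unfolding Fm_def Fp_def D_def fminus_poly_def by (simp add: fps_eq_iff diff_divide_distrib)
  then have "Fm * E = E * D - Fp * E" by (simp only: left_diff_distrib mult.commute[of D E])
  also have "\<dots> = fps_const (1 - x) * fps_exp x - (fps_exp x - fps_const x * fps_exp 1)"
    unfolding plus unfolding E_def D_def dB_egf ..
  also have "\<dots> = fps_const x * (fps_exp 1 - fps_exp x)"
    by (simp add: fps_eq_iff field_simps)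
  finally have minus: "Fm * E = fps_const x * (fps_exp 1 - fps_exp x)" .
  have "Fp = (fps_exp x - fps_const x * fps_exp 1) / E"
    using fps_divide_times_eq[OF \<open>E \<noteq> 0\<close>, of Fp] unfolding plus by (rule sym)
  moreover have "Fm = fps_const x * (fps_exp 1 - fps_exp x) / E"
    using fps_divide_times_eq[OF \<open>E \<noteq> 0\<close>, of Fm] unfolding minus by (rule sym)
  ultimately show ?thesis unfolding Fp_def Fm_def E_def fplus_eq fminus_eq by (rule conjI)
qed

end
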